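(* Let $S$ be any shape having $k$ turning points and $l$ line segments, and let $i(S)$ be the incompressible shape obtained from $S$ by compressing all its compressible columns and rows. Then: (a) $i(S)$ has $k$ turning points and $l$ line segments; (b) there is a one-to-one correspondence between the turning points and line segments of $i(S)$ and those of $S$ such that $i(S)$ and $S$ are geometrically equivalent up to the lengths of their line segments, the length of each line segment of $i(S)$ is at most the length of the corresponding line segment of $S$, and the relative order of the turning points with respect to each other (in both coordinates) is the same in $S$ and $i(S)$; (c) $i(S)$ fits within a $k\times k$ square area of the grid.
   Context: A shape $S=(V,E)$ is a finite connected graph whose nodes occupy distinct integer grid points and whose edges join only nodes at orthogonal distance $1$. A node $u$ is a turning point of $S$ if $u$ is a leaf or $u$ has two neighbors $v_1,v_2$ with $v_1u$ perpendicular to $uv_2$. A line segment is a maximal straight path of $S$ between two turning points containing no other turning point. A column (row) of $S$ is a grid column (row) containing nodes of $S$; it is compressible if it contains no turning point of $S$ (then it contains no vertical (horizontal) edges and meets only horizontal (vertical) segments, each of which extends through it). For a maximal run $C_l,\dots,C_r$ of consecutive compressible columns, every horizontal segment $s$ meeting them has a node $u_{l-1}(s)$ in column $C_{l-1}$ and a node $u_{r+1}(s)$ in $C_{r+1}$; a compression operation deletes the nodes in columns $C_l,\dots,C_r$, shifts everything to the right of $C_r$ left by $r-l+1$ units, and joins $u_{l-1}(s)$ to $u_{r+1}(s)$ for each such $s$. Compression of rows is defined analogously. A shape is incompressible if it has no compressible columns or rows; $i(S)$ denotes the incompressible shape obtained by compressing all compressible columns and rows of $S$. *)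

theory Defs
  imports Main
begin

text \<open>Grid points are pairs of integers (column, row).  A shape is given by its
  node set V and its edge set E, an edge being a two-element set of nodes.\<close>

type_synonym gpt = "int \<times> int"

definition unit_dist :: "gpt \<Rightarrow> gpt \<Rightarrow> bool" where
  "unit_dist u v \<longleftrightarrow> \<bar>fst u - fst v\<bar> + \<bar>snd u - snd v\<bar> = 1"

definition edge_rel :: "gpt set set \<Rightarrow> (gpt \<times> gpt) set" where
  "edge_rel E = {(a, b). {a, b} \<in> E}"

definition is_shape :: "gpt set \<Rightarrow> gpt set set \<Rightarrow> bool" where
  "is_shape V E \<longleftrightarrow> finite V \<and> V \<noteq> {} \<and>
     (\<forall>e\<in>E. \<exists>u v. e = {u, v} \<and> u \<in> V \<and> v \<in> V \<and> unit_dist u v) \<and>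
     (\<forall>u\<in>V. \<forall>v\<in>V. (u, v) \<in> (edge_rel E)\<^sup>*)"

definition nbrs :: "gpt set set \<Rightarrow> gpt \<Rightarrow> gpt set" where
  "nbrs E u = {v. {u, v} \<in> E}"

definition turning :: "gpt set \<Rightarrow> gpt set set \<Rightarrow> gpt \<Rightarrow> bool" where
  "turning V E u \<longleftrightarrow> u \<in> V \<and>
     (card (nbrs E u) = 1 \<or>
      (\<exists>v1\<in>nbrs E u. \<exists>v2\<in>nbrs E u.
         (fst v1 - fst u) * (fst v2 - fst u) + (snd v1 - snd u) * (snd v2 - snd u) = 0))"

definition turning_points :: "gpt set \<Rightarrow> gpt set set \<Rightarrow> gpt set" where
  "turning_points V E = {u. turning V E u}"

text \<open>Grid distance and the t-th grid point on the straight line from u towards v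
  (meaningful when u and v share a row or a column).\<close>
definition gdist :: "gpt \<Rightarrow> gpt \<Rightarrow> nat" where
  "gdist u v = nat (\<bar>fst v - fst u\<bar> + \<bar>snd v - snd u\<bar>)"

definition line_pt :: "gpt \<Rightarrow> gpt \<Rightarrow> nat \<Rightarrow> gpt" where
  "line_pt u v t = (fst u + int t * sgn (fst v - fst u), snd u + int t * sgn (snd v - snd u))"

definition straight_path :: "gpt set set \<Rightarrow> gpt \<Rightarrow> gpt \<Rightarrow> bool" where
  "straight_path E u v \<longleftrightarrow> u \<noteq> v \<and> (fst u = fst v \<or> snd u = snd v) \<and>
     (\<forall>t < gdist u v. {line_pt u v t, line_pt u v (Suc t)} \<in> E)"

definition interior_pts :: "gpt \<Rightarrow> gpt \<Rightarrow> gpt set" where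
  "interior_pts u v = {line_pt u v t | t. 0 < t \<and> t < gdist u v}"

text \<open>Segments are unordered, so represented as sets {u, v};
  the length of the segment {u, v} is gdist u v.\<close>
definition is_segment :: "gpt set \<Rightarrow> gpt set set \<Rightarrow> gpt \<Rightarrow> gpt \<Rightarrow> bool" where
  "is_segment V E u v \<longleftrightarrow> turning V E u \<and> turning V E v \<and> straight_path E u v \<and>
     (\<forall>w\<in>interior_pts u v. \<not> turning V E w)"

definition line_segments :: "gpt set \<Rightarrow> gpt set set \<Rightarrow> gpt set set" where
  "line_segments V E = {{u, v} | u v. is_segment V E u v}"

definition comp_col :: "gpt set \<Rightarrow> gpt set set \<Rightarrow> int \<Rightarrow> bool" where
  "comp_col V E x \<longleftrightarrow> (\<exists>y. (x, y) \<in> V) \<and> (\<forall>y. \<not> turning V E (x, y))"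

definition comp_row :: "gpt set \<Rightarrow> gpt set set \<Rightarrow> int \<Rightarrow> bool" where
  "comp_row V E y \<longleftrightarrow> (\<exists>x. (x, y) \<in> V) \<and> (\<forall>x. \<not> turning V E (x, y))"

definition incompressible :: "gpt set \<Rightarrow> gpt set set \<Rightarrow> bool" where
  "incompressible V E \<longleftrightarrow> (\<forall>x. \<not> comp_col V E x) \<and> (\<forall>y. \<not> comp_row V E y)"

text \<open>Result of compressing all compressible columns and rows at once.
  Two surviving nodes are joined iff they are joined in S by a straight path all of
  whose interior nodes are deleted (this covers the original edges between surviving
  nodes, and the new edges u_{l-1}(s) u_{r+1}(s) joining across compressed runs).\<close>
definition survivor :: "gpt set \<Rightarrow> gpt set set \<Rightarrow> gpt \<Rightarrow> bool" where
  "survivor V E p \<longleftrightarrow> p \<in> V \<and> \<not> comp_col V E (fst p) \<and> \<not> comp_row V E (snd p)"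

definition cmap :: "gpt set \<Rightarrow> gpt set set \<Rightarrow> gpt \<Rightarrow> gpt" where
  "cmap V E p = (fst p - int (card {c. c < fst p \<and> comp_col V E c}),
                 snd p - int (card {r. r < snd p \<and> comp_row V E r}))"

definition compress_all :: "gpt set \<Rightarrow> gpt set set \<Rightarrow> gpt set \<times> gpt set set" where
  "compress_all V E =
     (cmap V E ` {p. survivor V E p},
      {{cmap V E p, cmap V E q} | p q. survivor V E p \<and> survivor V E q \<and>
          straight_path E p q \<and> (\<forall>w\<in>interior_pts p q. \<not> survivor V E w)})"

end

theory Submission
  imports Defs "HOL-Library.Product_Plus"
begin

text \<open>
  Compression deletes only columns and rows without turning points and shifts every
  remaining line by the number of deleted lines before it.  So all turning points
  survive, surviving nodes keep their relative order in both coordinates, and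
  distances can only shrink.  Since a node that is not a turning point is passed
  straight through, walking from a surviving node in some direction crosses only
  deleted columns (rows) until the next surviving one, which becomes its neighbour
  after compression.  Hence each surviving node has edges in exactly the same
  directions before and after compression, so turning points, straight paths
  between them and line segments all correspond.  Finally, every column that is
  not deleted contains a turning point and, the shape being connected, the
  occupied columns form an interval; so the compressed shape spans at most k
  columns, and likewise at most k rows.  Vertical statements are reduced to
  horizontal ones by transposing the shape, which commutes with compression.
\<close>

section \<open>Compressed coordinates\<close>

definition compress_coord :: "(int \<Rightarrow> bool) \<Rightarrow> int \<Rightarrow> int" where
  "compress_coord P x = x - int (card {c. c < x \<and> P c})"

lemma compress_coord_diff:
  assumes fin: "finite {c. P c}" and ab: "a \<le> b"
  shows "compress_coord P b - compress_coord P a = int (card {c. a \<le> c \<and> c < b \<and> \<not> P c})"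
proof -
  have fin_below: "finite {c. c < a \<and> P c}" "finite {c. a \<le> c \<and> c < b \<and> P c}"
    using fin by (auto intro: finite_subset)
  have "{c. c < b \<and> P c} = {c. c < a \<and> P c} \<union> {c. a \<le> c \<and> c < b \<and> P c}"
    using ab by auto
  hence below_b: "card {c. c < b \<and> P c} = card {c. c < a \<and> P c} + card {c. a \<le> c \<and> c < b \<and> P c}"
    using fin_below by (simp add: card_Un_disjoint disjoint_iff)
  have "{a..<b} = {c. a \<le> c \<and> c < b \<and> P c} \<union> {c. a \<le> c \<and> c < b \<and> \<not> P c}" by auto
  hence "card {a..<b} = card {c. a \<le> c \<and> c < b \<and> P c} + card {c. a \<le> c \<and> c < b \<and> \<not> P c}"
    by (subst card_Un_disjoint[symmetric]) (auto intro: finite_subset[of _ "{a..<b}"])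
  thus ?thesis using below_b ab unfolding compress_coord_def by simp
qed

lemma compress_coord_mono: "finite {c. P c} \<Longrightarrow> a \<le> b \<Longrightarrow> compress_coord P a \<le> compress_coord P b"
  using compress_coord_diff[of P a b] by simp

lemma compress_coord_diff_le:
  assumes "finite {c. P c}" and "a \<le> b"
  shows "compress_coord P b - compress_coord P a \<le> b - a"
proof -
  have "card {c. a \<le> c \<and> c < b \<and> \<not> P c} \<le> card {a..<b}"
    by (rule card_mono) auto
  thus ?thesis using compress_coord_diff[OF assms] assms(2) by simp
qed

lemma compress_coord_strict_mono:
  assumes fin: "finite {c. P c}" and "a < b" and "\<not> P a"
  shows "compress_coord P a < compress_coord P b"
proof -
  have "card {c. a \<le> c \<and> c < b \<and> \<not> P c} > 0"
    using assms by (subst card_gt_0_iff) (auto intro: finite_subset[of _ "{a..<b}"])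
  thus ?thesis using compress_coord_diff[OF fin, of a b] assms(2) by simp
qed

lemma compress_coord_le_iff:
  "finite {c. P c} \<Longrightarrow> \<not> P a \<Longrightarrow> \<not> P b \<Longrightarrow> compress_coord P a \<le> compress_coord P b \<longleftrightarrow> a \<le> b"
proof -
  assume fin: "finite {c. P c}" and "\<not> P a" "\<not> P b"
  show ?thesis
  proof
    show "a \<le> b" if "compress_coord P a \<le> compress_coord P b"
    proof (rule ccontr)
      assume "\<not> a \<le> b"
      hence "compress_coord P b < compress_coord P a"
        using compress_coord_strict_mono[OF fin _ \<open>\<not> P b\<close>] by simp
      thus False using that by simp
    qed
  qed (rule compress_coord_mono[OF fin])
qed

lemma compress_coord_eq_iff:
  "finite {c. P c} \<Longrightarrow> \<not> P a \<Longrightarrow> \<not> P b \<Longrightarrow> compress_coord P a = compress_coord P b \<longleftrightarrow> a = b"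
  using compress_coord_le_iff[of P a b] compress_coord_le_iff[of P b a] by linarith

lemma compress_coord_succ:
  assumes "finite {c. P c}" and "a < b" and "\<not> P a" and "\<forall>c. a < c \<and> c < b \<longrightarrow> P c"
  shows "compress_coord P b = compress_coord P a + 1"
proof -
  have "{c. a \<le> c \<and> c < b \<and> \<not> P c} = {a}" using assms by force
  thus ?thesis using compress_coord_diff[of P a b] assms by simp
qed

lemma compress_coord_attains:
  assumes fin: "finite {c. P c}" and "compress_coord P a \<le> X" and "X < compress_coord P b"
  shows "\<exists>x. a \<le> x \<and> x < b \<and> \<not> P x \<and> compress_coord P x = X"
proof -
  have ab: "a \<le> b"
  proof (rule ccontr)
    assume "\<not> a \<le> b"
    hence "compress_coord P b \<le> compress_coord P a" by (simp add: compress_coord_mono[OF fin])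
    thus False using assms by linarith
  qed
  define S where "S = {c. a \<le> c \<and> c \<le> b \<and> compress_coord P c \<le> X}"
  define x where "x = Max S"
  have "finite S" unfolding S_def by (rule finite_subset[of _ "{a..b}"]) auto
  moreover have "a \<in> S" unfolding S_def using ab assms by auto
  ultimately have "x \<in> S" and "x + 1 \<notin> S"
    unfolding x_def using Max_in Max_ge[of S "Max S + 1"] by auto
  hence x: "a \<le> x" "x < b" "compress_coord P x \<le> X" "X < compress_coord P (x + 1)"
    using assms(3) unfolding S_def by (auto simp: order.order_iff_strict)
  have "{c. x \<le> c \<and> c < x + 1 \<and> \<not> P c} = (if P x then {} else {x})"
    by auto
  hence "compress_coord P (x + 1) - compress_coord P x = int (card (if P x then {} else {x}))"
    using compress_coord_diff[OF fin, of x "x + 1"] by simp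
  hence "\<not> P x \<and> compress_coord P x = X" using x(3,4) by (cases "P x") auto
  thus ?thesis using x(1,2) by blast
qed

lemma next_non_member:
  fixes P :: "int \<Rightarrow> bool"
  assumes "finite {c. P c}"
  shows "\<exists>b>a. \<not> P b \<and> (\<forall>c. a < c \<and> c < b \<longrightarrow> P c)"
proof -
  have "finite ((\<lambda>n::nat. a + 1 + int n) -` {c. P c})"
    by (rule finite_vimageI[OF assms]) (simp add: inj_on_def)
  moreover have "infinite (UNIV :: nat set)" by simp
  ultimately have ex: "\<exists>n::nat. \<not> P (a + 1 + int n)"
    by (metis (mono_tags, lifting) UNIV_eq_I mem_Collect_eq vimage_Collect_eq)
  define m where "m = (LEAST n::nat. \<not> P (a + 1 + int n))"
  have "\<not> P (a + 1 + int m)" unfolding m_def by (rule LeastI_ex[OF ex])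
  moreover have "P c" if "a < c" "c < a + 1 + int m" for c
    using not_less_Least[of "nat (c - a - 1)" "\<lambda>n. \<not> P (a + 1 + int n)"] that
    unfolding m_def by simp
  ultimately show ?thesis by (intro exI[of _ "a + 1 + int m"]) auto
qed

lemma prev_non_member:
  fixes P :: "int \<Rightarrow> bool"
  assumes "finite {c. P c}"
  shows "\<exists>b<a. \<not> P b \<and> (\<forall>c. b < c \<and> c < a \<longrightarrow> P c)"
proof -
  have "finite {c. P (- c)}"
    using finite_vimageI[OF assms, of uminus] by (simp add: vimage_def)
  then obtain b where "b > - a" "\<not> P (- b)" "\<forall>c. - a < c \<and> c < b \<longrightarrow> P (- c)"
    using next_non_member by blast
  moreover have "P c" if "- b < c" "c < a" for c
    using that \<open>\<forall>c. - a < c \<and> c < b \<longrightarrow> P (- c)\<close>[rule_format, of "- c"] by simp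
  ultimately show ?thesis by (intro exI[of _ "- b"]) auto
qed

section \<open>Edge directions and straight paths\<close>

definition unit_dirs :: "gpt set" where
  "unit_dirs = {(1, 0), (-1, 0), (0, 1), (0, -1)}"

lemma unit_dist_iff_unit_dirs: "unit_dist u v \<longleftrightarrow> v - u \<in> unit_dirs"
  by (cases u; cases v) (auto simp: unit_dist_def unit_dirs_def abs_if; arith)

lemma unit_dist_commute: "unit_dist u v \<longleftrightarrow> unit_dist v u"
  by (simp add: unit_dist_def abs_minus_commute)

definition edge_dirs :: "gpt set set \<Rightarrow> gpt \<Rightarrow> gpt set" where
  "edge_dirs E u = {d. {u, u + d} \<in> E}"

lemma turning_iff_edge_dirs:
  "turning V E u \<longleftrightarrow> u \<in> V \<and> (card (edge_dirs E u) = 1 \<or>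
     (\<exists>d1\<in>edge_dirs E u. \<exists>d2\<in>edge_dirs E u. fst d1 * fst d2 + snd d1 * snd d2 = 0))"
proof -
  have nbrs: "nbrs E u = (\<lambda>d. u + d) ` edge_dirs E u"
    unfolding nbrs_def edge_dirs_def by (auto intro: image_eqI[of _ _ "_ - u"])
  have "card (nbrs E u) = card (edge_dirs E u)"
    unfolding nbrs by (rule card_image) (simp add: inj_on_def)
  thus ?thesis unfolding turning_def nbrs by auto
qed

lemma nonturning_continues:
  assumes "\<not> turning V E w" and "w \<in> V" and "edge_dirs E w \<subseteq> unit_dirs"
    and "d \<in> unit_dirs" and "- d \<in> edge_dirs E w"
  shows "d \<in> edge_dirs E w"
proof (rule ccontr)
  assume "d \<notin> edge_dirs E w"
  have no_perp: "\<not> (\<exists>d1\<in>edge_dirs E w. \<exists>d2\<in>edge_dirs E w. fst d1 * fst d2 + snd d1 * snd d2 = 0)"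
    and "card (edge_dirs E w) \<noteq> 1" using assms(1,2) turning_iff_edge_dirs by blast+
  moreover have "edge_dirs E w \<subseteq> {- d}"
  proof
    fix e assume e: "e \<in> edge_dirs E w"
    hence "fst (- d) * fst e + snd (- d) * snd e \<noteq> 0" using no_perp assms(5) by blast
    thus "e \<in> {- d}" using e assms(3,4) \<open>d \<notin> edge_dirs E w\<close> by (auto simp: unit_dirs_def)
  qed
  ultimately show False using assms(5) by (auto dest: subset_singletonD)
qed

lemma gdist_commute: "gdist u v = gdist v u"
  by (simp add: gdist_def abs_minus_commute add.commute)

lemma line_coord_reverse:
  fixes p q t :: int
  assumes "0 \<le> t" "t \<le> \<bar>q - p\<bar>"
  shows "q + t * sgn (p - q) = p + (\<bar>q - p\<bar> - t) * sgn (q - p)"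
  using assms by (cases p q rule: linorder_cases) (simp_all add: algebra_simps)

lemma line_pt_commute:
  assumes "fst u = fst v \<or> snd u = snd v" and "t \<le> gdist u v"
  shows "line_pt v u t = line_pt u v (gdist u v - t)"
proof -
  have g: "int (gdist u v - t) = \<bar>fst v - fst u\<bar> + \<bar>snd v - snd u\<bar> - int t"
    and t: "int t \<le> \<bar>fst v - fst u\<bar> + \<bar>snd v - snd u\<bar>"
    using assms(2) unfolding gdist_def by simp_all
  from assms(1) show ?thesis
  proof
    assume "fst u = fst v"
    thus ?thesis using line_coord_reverse[of "int t" "snd v" "snd u"] t unfolding line_pt_def g by simp
  next
    assume "snd u = snd v"
    thus ?thesis using line_coord_reverse[of "int t" "fst v" "fst u"] t unfolding line_pt_def g by simp
  qed
qed

lemma straight_path_commute: "straight_path E u v \<longleftrightarrow> straight_path E v u"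
proof -
  have *: "straight_path E v u" if uv: "straight_path E u v" for u v
  proof -
    have al: "fst u = fst v \<or> snd u = snd v" using uv by (simp add: straight_path_def)
    have "{line_pt v u t, line_pt v u (Suc t)} \<in> E" if t: "t < gdist v u" for t
    proof -
      have "{line_pt u v (gdist u v - Suc t), line_pt u v (Suc (gdist u v - Suc t))} \<in> E"
        using uv t unfolding straight_path_def by (simp add: gdist_commute)
      moreover have "Suc (gdist u v - Suc t) = gdist u v - t" using t by (simp add: gdist_commute)
      ultimately show ?thesis using t al line_pt_commute[of u v]
        by (simp add: gdist_commute insert_commute)
    qed
    thus ?thesis using uv unfolding straight_path_def by auto
  qed
  show ?thesis using *[of u v] *[of v u] by blast
qed

lemma interior_pts_commute:
  assumes "fst u = fst v \<or> snd u = snd v"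
  shows "interior_pts u v = interior_pts v u"
proof -
  have "line_pt v u t \<in> interior_pts u v" if "0 < t" "t < gdist u v" for t
    using that line_pt_commute[OF assms, of t] unfolding interior_pts_def
    by (intro CollectI exI[of _ "gdist u v - t"]) auto
  moreover have "line_pt u v t \<in> interior_pts v u" if "0 < t" "t < gdist u v" for t
    using that line_pt_commute[OF assms, of "gdist u v - t"] unfolding interior_pts_def
    by (intro CollectI exI[of _ "gdist u v - t"]) (auto simp: gdist_commute)
  ultimately show ?thesis unfolding interior_pts_def by (auto simp: gdist_commute)
qed

lemma is_segment_commute: "is_segment V E u v \<longleftrightarrow> is_segment V E v u"
proof (cases "fst u = fst v \<or> snd u = snd v")
  case True
  thus ?thesis unfolding is_segment_def
    using straight_path_commute[of E u v] interior_pts_commute[OF True] by auto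
next
  case False
  thus ?thesis unfolding is_segment_def straight_path_def by auto
qed

definition hpath :: "gpt set set \<Rightarrow> int \<Rightarrow> int \<Rightarrow> int \<Rightarrow> bool" where
  "hpath E y a b \<longleftrightarrow> (\<forall>x. a \<le> x \<and> x < b \<longrightarrow> {(x, y), (x + 1, y)} \<in> E)"

lemma hpath_extend_right:
  assumes "a \<le> b"
  shows "hpath E y a (b + 1) \<longleftrightarrow> hpath E y a b \<and> {(b, y), (b + 1, y)} \<in> E"
proof
  assume "hpath E y a (b + 1)"
  thus "hpath E y a b \<and> {(b, y), (b + 1, y)} \<in> E" using assms unfolding hpath_def by simp
next
  assume h: "hpath E y a b \<and> {(b, y), (b + 1, y)} \<in> E"
  show "hpath E y a (b + 1)" unfolding hpath_def
  proof (intro allI impI)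
    fix x assume "a \<le> x \<and> x < b + 1"
    thus "{(x, y), (x + 1, y)} \<in> E" using h unfolding hpath_def by (cases "x = b") auto
  qed
qed

lemma hpath_extend_left:
  assumes "a \<le> b"
  shows "hpath E y (a - 1) b \<longleftrightarrow> {(a - 1, y), (a, y)} \<in> E \<and> hpath E y a b"
proof
  assume "hpath E y (a - 1) b"
  thus "{(a - 1, y), (a, y)} \<in> E \<and> hpath E y a b"
    using assms unfolding hpath_def by (auto dest: spec[of _ "a - 1"])
next
  assume h: "{(a - 1, y), (a, y)} \<in> E \<and> hpath E y a b"
  show "hpath E y (a - 1) b" unfolding hpath_def
  proof (intro allI impI)
    fix x assume "a - 1 \<le> x \<and> x < b"
    thus "{(x, y), (x + 1, y)} \<in> E" using h unfolding hpath_def by (cases "x = a - 1") auto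
  qed
qed

lemma hpath_unit: "hpath E y a (a + 1) \<longleftrightarrow> {(a, y), (a + 1, y)} \<in> E"
  using hpath_extend_right[of a a E y] by (auto simp: hpath_def)

lemma gdist_hline: "a < b \<Longrightarrow> gdist (a, y) (b, y) = nat (b - a)"
  by (simp add: gdist_def)

lemma line_pt_hline: "a < b \<Longrightarrow> line_pt (a, y) (b, y) t = (a + int t, y)"
  by (simp add: line_pt_def)

lemma straight_path_hline:
  assumes "a < b"
  shows "straight_path E (a, y) (b, y) \<longleftrightarrow> hpath E y a b"
proof -
  have "(\<forall>t<nat (b - a). {(a + int t, y), (a + int (Suc t), y)} \<in> E) \<longleftrightarrow> hpath E y a b"
    unfolding hpath_def
  proof safe
    fix x assume "\<forall>t<nat (b - a). {(a + int t, y), (a + int (Suc t), y)} \<in> E" "a \<le> x" "x < b"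
    thus "{(x, y), (x + 1, y)} \<in> E" by (auto dest: spec[of _ "nat (x - a)"] simp: add.commute)
  next
    fix t assume "\<forall>x. a \<le> x \<and> x < b \<longrightarrow> {(x, y), (x + 1, y)} \<in> E" "t < nat (b - a)"
    hence "{(a + int t, y), (a + int t + 1, y)} \<in> E" by auto
    thus "{(a + int t, y), (a + int (Suc t), y)} \<in> E" by (simp add: ac_simps)
  qed
  thus ?thesis using assms unfolding straight_path_def gdist_hline[OF assms] line_pt_hline[OF assms]
    by simp
qed

lemma interior_pts_hline:
  assumes "a < b"
  shows "interior_pts (a, y) (b, y) = {(x, y) | x. a < x \<and> x < b}"
proof -
  have "(x, y) \<in> (\<lambda>t. (a + int t, y)) ` {t. 0 < t \<and> t < nat (b - a)}" if "a < x" "x < b" for x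
    using that by (intro image_eqI[of _ _ "nat (x - a)"]) auto
  hence "(\<lambda>t. (a + int t, y)) ` {t. 0 < t \<and> t < nat (b - a)} = {(x, y) | x. a < x \<and> x < b}"
    by auto
  thus ?thesis
    unfolding interior_pts_def gdist_hline[OF assms] line_pt_hline[OF assms] by (auto simp: image_def)
qed

section \<open>Transposition\<close>

definition transpose_edges :: "gpt set set \<Rightarrow> gpt set set" where
  "transpose_edges E = (\<lambda>e. prod.swap ` e) ` E"

lemma mem_swap_image_iff: "d \<in> prod.swap ` A \<longleftrightarrow> prod.swap d \<in> A"
  by (cases d) simp

lemma swap_image_eq_iff: "prod.swap ` A = B \<longleftrightarrow> A = prod.swap ` B"
  by (auto simp: mem_swap_image_iff)

lemma doubleton_in_transpose_edges [simp]:
  "{u, v} \<in> transpose_edges E \<longleftrightarrow> {prod.swap u, prod.swap v} \<in> E"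
proof -
  have swap_eq: "{u, v} = prod.swap ` e \<longleftrightarrow> e = {prod.swap u, prod.swap v}" for e :: "gpt set"
    using swap_image_eq_iff[of e "{u, v}"] by auto
  have "{u, v} \<in> transpose_edges E \<longleftrightarrow> (\<exists>e\<in>E. {u, v} = prod.swap ` e)"
    unfolding transpose_edges_def by blast
  also have "\<dots> \<longleftrightarrow> {prod.swap u, prod.swap v} \<in> E"
    by (simp only: swap_eq) blast
  finally show ?thesis .
qed

lemma swap_add: "prod.swap (u + d) = prod.swap u + prod.swap d"
  by (cases u; cases d) simp

lemma edge_dirs_transpose:
  "edge_dirs (transpose_edges E) (prod.swap u) = prod.swap ` edge_dirs E u"
proof -
  have "d \<in> edge_dirs (transpose_edges E) (prod.swap u) \<longleftrightarrow> prod.swap d \<in> edge_dirs E u" for d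
    unfolding edge_dirs_def by (simp add: swap_add)
  thus ?thesis by (auto simp: mem_swap_image_iff)
qed

lemma turning_transpose:
  "turning (prod.swap ` V) (transpose_edges E) (prod.swap u) \<longleftrightarrow> turning V E u"
proof -
  have "card (prod.swap ` edge_dirs E u) = card (edge_dirs E u)"
    by (simp add: card_image)
  moreover have "prod.swap u \<in> prod.swap ` V \<longleftrightarrow> u \<in> V"
    by (simp add: inj_image_mem_iff)
  ultimately show ?thesis
    unfolding turning_iff_edge_dirs edge_dirs_transpose by (auto simp: add.commute)
qed

lemma comp_col_transpose: "comp_col (prod.swap ` V) (transpose_edges E) = comp_row V E"
  using turning_transpose[of V E "(_, _)"] by (auto simp: comp_col_def comp_row_def fun_eq_iff)

lemma comp_row_transpose: "comp_row (prod.swap ` V) (transpose_edges E) = comp_col V E"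
  using turning_transpose[of V E "(_, _)"] by (auto simp: comp_col_def comp_row_def fun_eq_iff)

lemma survivor_transpose:
  "survivor (prod.swap ` V) (transpose_edges E) (prod.swap p) \<longleftrightarrow> survivor V E p"
  by (auto simp: survivor_def comp_col_transpose comp_row_transpose inj_image_mem_iff)

lemma cmap_transpose:
  "cmap (prod.swap ` V) (transpose_edges E) (prod.swap p) = prod.swap (cmap V E p)"
  by (simp add: cmap_def comp_col_transpose comp_row_transpose)

lemma unit_dist_transpose: "unit_dist (prod.swap u) (prod.swap v) \<longleftrightarrow> unit_dist u v"
  by (simp add: unit_dist_def add.commute)

lemma gdist_transpose: "gdist (prod.swap u) (prod.swap v) = gdist u v"
  by (simp add: gdist_def add.commute)

lemma line_pt_transpose: "line_pt (prod.swap u) (prod.swap v) t = prod.swap (line_pt u v t)"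
  by (simp add: line_pt_def)

lemma straight_path_transpose:
  "straight_path (transpose_edges E) (prod.swap u) (prod.swap v) \<longleftrightarrow> straight_path E u v"
  by (auto simp: straight_path_def gdist_transpose line_pt_transpose prod_eq_iff)

lemma interior_pts_transpose:
  "interior_pts (prod.swap u) (prod.swap v) = prod.swap ` interior_pts u v"
  by (auto simp: interior_pts_def gdist_transpose line_pt_transpose)

lemma is_segment_transpose:
  "is_segment (prod.swap ` V) (transpose_edges E) (prod.swap u) (prod.swap v) \<longleftrightarrow> is_segment V E u v"
  by (simp add: is_segment_def turning_transpose straight_path_transpose interior_pts_transpose)

lemma turning_points_transpose:
  "turning_points (prod.swap ` V) (transpose_edges E) = prod.swap ` turning_points V E"
  using turning_transpose[of V E] by (auto simp: turning_points_def mem_swap_image_iff)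

lemma is_shape_transpose:
  assumes "is_shape V E"
  shows "is_shape (prod.swap ` V) (transpose_edges E)"
proof -
  have conn: "(prod.swap u, prod.swap v) \<in> (edge_rel (transpose_edges E))\<^sup>*"
    if "(u, v) \<in> (edge_rel E)\<^sup>*" for u v
    using that
  proof induction
    case (step v w)
    hence "(prod.swap v, prod.swap w) \<in> edge_rel (transpose_edges E)"
      by (simp add: edge_rel_def)
    thus ?case using step.IH by (rule rtrancl_into_rtrancl[rotated])
  qed simp
  have edges: "\<exists>u v. e = {u, v} \<and> u \<in> prod.swap ` V \<and> v \<in> prod.swap ` V \<and> unit_dist u v"
    if e: "e \<in> transpose_edges E" for e
  proof -
    obtain e0 where e0: "e0 \<in> E" "e = prod.swap ` e0"
      using e unfolding transpose_edges_def by blast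
    have "\<forall>e\<in>E. \<exists>u v. e = {u, v} \<and> u \<in> V \<and> v \<in> V \<and> unit_dist u v"
      using assms unfolding is_shape_def by (elim conjE)
    then obtain u v where "e0 = {u, v}" "u \<in> V" "v \<in> V" "unit_dist u v"
      using e0(1) by blast
    moreover have "unit_dist (prod.swap u) (prod.swap v)"
      using \<open>unit_dist u v\<close> by (simp add: unit_dist_transpose)
    ultimately show ?thesis using e0(2) by (intro exI[of _ "prod.swap u"] exI[of _ "prod.swap v"]) simp
  qed
  have "(u, v) \<in> (edge_rel (transpose_edges E))\<^sup>*" if uv: "u \<in> prod.swap ` V" "v \<in> prod.swap ` V" for u v
  proof -
    obtain u0 v0 where "u = prod.swap u0" "v = prod.swap v0" "u0 \<in> V" "v0 \<in> V"
      using uv by blast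
    thus ?thesis using conn assms unfolding is_shape_def by simp
  qed
  thus ?thesis using assms edges unfolding is_shape_def by (simp add: finite_imageI)
qed

lemma compress_all_transpose:
  "compress_all (prod.swap ` V) (transpose_edges E)
     = (prod.swap ` fst (compress_all V E), transpose_edges (snd (compress_all V E)))"
proof -
  let ?V = "prod.swap ` V" and ?E = "transpose_edges E"
  have reindex: "{f p q | p q. P p q} = {f (prod.swap p) (prod.swap q) | p q. P (prod.swap p) (prod.swap q)}"
    for f :: "gpt \<Rightarrow> gpt \<Rightarrow> gpt set" and P
  proof (intro equalityI subsetI)
    fix e assume "e \<in> {f p q | p q. P p q}"
    then obtain p q where "e = f p q" "P p q" by blast
    thus "e \<in> {f (prod.swap p) (prod.swap q) | p q. P (prod.swap p) (prod.swap q)}"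
      by (intro CollectI exI[of _ "prod.swap p"] exI[of _ "prod.swap q"]) simp
  qed blast
  have "survivor ?V ?E p \<longleftrightarrow> survivor V E (prod.swap p)" for p
    using survivor_transpose[of V E "prod.swap p"] by simp
  hence surv: "{p. survivor ?V ?E p} = prod.swap ` {p. survivor V E p}"
    by (auto simp: mem_swap_image_iff)
  have fst_eq: "fst (compress_all ?V ?E) = prod.swap ` fst (compress_all V E)"
    unfolding compress_all_def surv by (simp add: image_image cmap_transpose)
  have interior: "(\<forall>w\<in>interior_pts (prod.swap p) (prod.swap q). \<not> survivor ?V ?E w)
      \<longleftrightarrow> (\<forall>w\<in>interior_pts p q. \<not> survivor V E w)" for p q
    by (simp add: interior_pts_transpose survivor_transpose)
  have edge: "{cmap ?V ?E (prod.swap p), cmap ?V ?E (prod.swap q)} = prod.swap ` {cmap V E p, cmap V E q}"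
    for p q by (simp add: cmap_transpose)
  have "snd (compress_all ?V ?E) = {prod.swap ` {cmap V E p, cmap V E q} | p q. survivor V E p
      \<and> survivor V E q \<and> straight_path E p q \<and> (\<forall>w\<in>interior_pts p q. \<not> survivor V E w)}"
    unfolding compress_all_def snd_conv
    by (subst reindex) (simp only: edge interior survivor_transpose straight_path_transpose)
  also have "\<dots> = transpose_edges (snd (compress_all V E))"
    unfolding compress_all_def snd_conv transpose_edges_def by blast
  finally show ?thesis using fst_eq by (simp add: prod_eq_iff)
qed

section \<open>Compression of a shape\<close>

locale grid_shape =
  fixes V :: "gpt set" and E :: "gpt set set"
  assumes shape: "is_shape V E"
begin

abbreviation "surv \<equiv> survivor V E"
abbreviation "cx \<equiv> compress_coord (comp_col V E)"
abbreviation "cy \<equiv> compress_coord (comp_row V E)"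
abbreviation "cV \<equiv> fst (compress_all V E)"
abbreviation "cE \<equiv> snd (compress_all V E)"

lemma transposed: "grid_shape (prod.swap ` V) (transpose_edges E)"
  using is_shape_transpose[OF shape] by unfold_locales

lemma finite_V: "finite V"
  using shape by (simp add: is_shape_def)

lemma finite_comp_cols: "finite {c. comp_col V E c}"
proof -
  have "{c. comp_col V E c} \<subseteq> fst ` V" unfolding comp_col_def by force
  thus ?thesis using finite_V finite_subset by blast
qed

lemma finite_comp_rows: "finite {c. comp_row V E c}"
  using grid_shape.finite_comp_cols[OF transposed] by (simp add: comp_col_transpose)

lemma cmap_eq: "cmap V E p = (cx (fst p), cy (snd p))"
  by (simp add: cmap_def compress_coord_def)

lemma edges_valid: "\<forall>e\<in>E. \<exists>u v. e = {u, v} \<and> u \<in> V \<and> v \<in> V \<and> unit_dist u v"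
  using shape unfolding is_shape_def by (elim conjE)

lemma connected: "u \<in> V \<Longrightarrow> v \<in> V \<Longrightarrow> (u, v) \<in> (edge_rel E)\<^sup>*"
  using shape unfolding is_shape_def by (elim conjE) blast

lemma edge_endpoints: "{u, v} \<in> E \<Longrightarrow> u \<in> V \<and> v \<in> V \<and> unit_dist u v"
proof -
  assume "{u, v} \<in> E"
  then obtain u' v' where "{u, v} = {u', v'}" "u' \<in> V" "v' \<in> V" "unit_dist u' v'"
    using edges_valid by blast
  moreover have "unit_dist v' u'" using \<open>unit_dist u' v'\<close> unit_dist_commute by blast
  ultimately show ?thesis unfolding doubleton_eq_iff by blast
qed

lemma edge_dirs_unit: "edge_dirs E w \<subseteq> unit_dirs"
proof
  fix d assume "d \<in> edge_dirs E w"
  hence "unit_dist w (w + d)" using edge_endpoints unfolding edge_dirs_def by blast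
  thus "d \<in> unit_dirs" by (simp add: unit_dist_iff_unit_dirs)
qed

lemma turning_imp_survivor: "turning V E u \<Longrightarrow> surv u"
  by (cases u) (auto simp: survivor_def comp_col_def comp_row_def turning_def)

lemma survivor_cx_le_iff: "surv p \<Longrightarrow> surv q \<Longrightarrow> cx (fst p) \<le> cx (fst q) \<longleftrightarrow> fst p \<le> fst q"
  by (simp add: compress_coord_le_iff[OF finite_comp_cols] survivor_def)

lemma survivor_cy_le_iff: "surv p \<Longrightarrow> surv q \<Longrightarrow> cy (snd p) \<le> cy (snd q) \<longleftrightarrow> snd p \<le> snd q"
  by (simp add: compress_coord_le_iff[OF finite_comp_rows] survivor_def)

lemma survivor_cx_eq_iff: "surv p \<Longrightarrow> surv q \<Longrightarrow> cx (fst p) = cx (fst q) \<longleftrightarrow> fst p = fst q"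
  by (simp add: compress_coord_eq_iff[OF finite_comp_cols] survivor_def)

lemma survivor_cy_eq_iff: "surv p \<Longrightarrow> surv q \<Longrightarrow> cy (snd p) = cy (snd q) \<longleftrightarrow> snd p = snd q"
  by (simp add: compress_coord_eq_iff[OF finite_comp_rows] survivor_def)

lemma inj_on_cmap: "inj_on (cmap V E) {p. surv p}"
  by (rule inj_onI) (simp add: cmap_eq prod_eq_iff survivor_cx_eq_iff survivor_cy_eq_iff)

lemma hpath_walk_right:
  assumes "{(a, y), (a + 1, y)} \<in> E" and "a < b"
    and "\<forall>c. a < c \<and> c < b \<longrightarrow> \<not> turning V E (c, y)"
  shows "hpath E y a b"
proof -
  have "a + 1 \<le> b" using assms(2) by simp
  thus ?thesis using assms(3)
  proof (induction b rule: int_ge_induct)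
    case base
    thus ?case using assms(1) by (simp add: hpath_unit)
  next
    case (step b)
    have hp: "hpath E y a b" using step by simp
    hence "{(b - 1, y), (b, y)} \<in> E" using step.hyps unfolding hpath_def by (auto dest: spec[of _ "b - 1"])
    hence "(b, y) \<in> V" and "- (1, 0) \<in> edge_dirs E (b, y)"
      using edge_endpoints by (auto simp: edge_dirs_def insert_commute)
    moreover have "\<not> turning V E (b, y)" using step by simp
    ultimately have "(1, 0) \<in> edge_dirs E (b, y)"
      using nonturning_continues edge_dirs_unit by (simp add: unit_dirs_def)
    thus ?case using hp hpath_extend_right[of a b] step.hyps by (simp add: edge_dirs_def)
  qed
qed

lemma hpath_walk_left:
  assumes "{(b - 1, y), (b, y)} \<in> E" and "a < b"
    and "\<forall>c. a < c \<and> c < b \<longrightarrow> \<not> turning V E (c, y)"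
  shows "hpath E y a b"
proof -
  have "a \<le> b - 1" using assms(2) by simp
  thus ?thesis using assms(3)
  proof (induction a rule: int_le_induct)
    case base
    thus ?case using assms(1) hpath_unit[of E y "b - 1"] by simp
  next
    case (step a)
    have hp: "hpath E y a b" using step by simp
    hence "{(a, y), (a + 1, y)} \<in> E" using step.hyps unfolding hpath_def by simp
    hence "(a, y) \<in> V" and "(1, 0) \<in> edge_dirs E (a, y)"
      using edge_endpoints by (auto simp: edge_dirs_def)
    moreover have "\<not> turning V E (a, y)" using step by simp
    ultimately have "- (1, 0) \<in> edge_dirs E (a, y)"
      using nonturning_continues[of V E "(a, y)" "- (1, 0)"] edge_dirs_unit by (simp add: unit_dirs_def)
    thus ?case using hp hpath_extend_left[of a b] step.hyps by (simp add: edge_dirs_def insert_commute)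
  qed
qed

lemma compressed_edgeI:
  "surv p \<Longrightarrow> surv q \<Longrightarrow> straight_path E p q \<Longrightarrow> \<forall>w\<in>interior_pts p q. \<not> surv w
    \<Longrightarrow> {cmap V E p, cmap V E q} \<in> cE"
  unfolding compress_all_def snd_conv by blast

lemma compressed_edgeE:
  assumes "e \<in> cE"
  obtains p q where "e = {cmap V E p, cmap V E q}" "surv p" "surv q" "straight_path E p q"
    "\<forall>w\<in>interior_pts p q. \<not> surv w"
  using assms unfolding compress_all_def by auto

lemma compressed_hline_step:
  assumes "surv (a, y)" "a < b" "hpath E y a b"
    and "\<forall>x. a < x \<and> x < b \<longrightarrow> \<not> surv (x, y)"
  shows "cx b = cx a + 1"
proof -
  have "comp_col V E x" if "a < x" "x < b" for x
  proof -
    have "{(x, y), (x + 1, y)} \<in> E" using assms(3) that unfolding hpath_def by simp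
    hence "(x, y) \<in> V" using edge_endpoints by blast
    thus ?thesis using assms(1,4) that unfolding survivor_def by auto
  qed
  thus ?thesis
    using compress_coord_succ[OF finite_comp_cols assms(2)] assms(1) unfolding survivor_def by simp
qed

lemma compressed_hline_unit:
  assumes "surv p" "surv q" "snd p = snd q" "straight_path E p q"
    and "\<forall>w\<in>interior_pts p q. \<not> surv w"
  shows "unit_dist (cmap V E p) (cmap V E q)"
proof -
  have ordered: "unit_dist (cmap V E (a, y)) (cmap V E (b, y))"
    if "a < b" "surv (a, y)" "surv (b, y)" "straight_path E (a, y) (b, y)"
      "\<forall>w\<in>interior_pts (a, y) (b, y). \<not> surv w" for a b y
  proof -
    have "cx b = cx a + 1"
      using compressed_hline_step[OF that(2,1)] that(4,5)
      unfolding straight_path_hline[OF that(1)] interior_pts_hline[OF that(1)] by auto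
    thus ?thesis by (simp add: cmap_eq unit_dist_def)
  qed
  obtain a b y where p: "p = (a, y)" and q: "q = (b, y)"
    using assms(3) by (cases p, cases q) auto
  have "a \<noteq> b" using assms(4) p q by (simp add: straight_path_def)
  then consider "a < b" | "b < a" by linarith
  thus ?thesis
  proof cases
    case 1
    thus ?thesis using ordered assms p q by blast
  next
    case 2
    hence "unit_dist (cmap V E q) (cmap V E p)"
      using ordered[of b a y] assms p q straight_path_commute[of E p q] interior_pts_commute[of p q]
      by simp
    thus ?thesis using unit_dist_commute by blast
  qed
qed

lemma compressed_edge_unit:
  assumes "{A, B} \<in> cE"
  shows "unit_dist A B"
proof -
  obtain p q where e: "{A, B} = {cmap V E p, cmap V E q}" and pq: "surv p" "surv q"
    "straight_path E p q" "\<forall>w\<in>interior_pts p q. \<not> surv w"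
    using assms by (rule compressed_edgeE)
  have "unit_dist (cmap V E p) (cmap V E q)"
  proof (cases "snd p = snd q")
    case True
    thus ?thesis using compressed_hline_unit pq by blast
  next
    case False
    hence "fst p = fst q" using pq(3) by (simp add: straight_path_def)
    thus ?thesis
      using grid_shape.compressed_hline_unit[OF transposed, of "prod.swap p" "prod.swap q"] pq
      by (simp add: survivor_transpose straight_path_transpose interior_pts_transpose
          cmap_transpose unit_dist_transpose)
  qed
  thus ?thesis using e unit_dist_commute unfolding doubleton_eq_iff by blast
qed

lemma compressed_hedgeE:
  assumes "{(X, Y), (X + 1, Y)} \<in> cE"
  obtains a b y where "a < b" "surv (a, y)" "surv (b, y)" "cx a = X" "cx b = X + 1" "cy y = Y"
    "hpath E y a b"
proof -
  obtain p q where e: "{(X, Y), (X + 1, Y)} = {cmap V E p, cmap V E q}" and pq: "surv p" "surv q"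
    "straight_path E p q"
    using assms by (rule compressed_edgeE)
  have "(cmap V E p = (X, Y) \<and> cmap V E q = (X + 1, Y)) \<or> (cmap V E q = (X, Y) \<and> cmap V E p = (X + 1, Y))"
    using e by (metis doubleton_eq_iff)
  hence "\<exists>p q. surv p \<and> surv q \<and> straight_path E p q \<and> cmap V E p = (X, Y) \<and> cmap V E q = (X + 1, Y)"
    using pq straight_path_commute[of E p q] by blast
  then obtain p q where pq: "surv p" "surv q" "straight_path E p q"
    and img: "cx (fst p) = X" "cy (snd p) = Y" "cx (fst q) = X + 1" "cy (snd q) = Y"
    by (auto simp: cmap_eq)
  have "fst p \<noteq> fst q" using img by auto
  hence "snd p = snd q" using pq(3) by (simp add: straight_path_def)
  moreover have "fst p < fst q"
    using img survivor_cx_le_iff[OF pq(2,1)] \<open>fst p \<noteq> fst q\<close> by auto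
  ultimately show ?thesis
    using that[of "fst p" "fst q" "snd p"] pq img straight_path_hline[of "fst p" "fst q" E "snd p"]
    by (cases p, cases q) auto
qed

lemma edge_right_compress:
  assumes "surv (a, y)"
  shows "{(a, y), (a + 1, y)} \<in> E \<longleftrightarrow> {(cx a, cy y), (cx a + 1, cy y)} \<in> cE"
proof
  assume e: "{(a, y), (a + 1, y)} \<in> E"
  obtain b where b: "a < b" "\<not> comp_col V E b" "\<forall>c. a < c \<and> c < b \<longrightarrow> comp_col V E c"
    using next_non_member[OF finite_comp_cols] by blast
  have h: "hpath E y a b" using hpath_walk_right[OF e b(1)] b(3) by (simp add: comp_col_def)
  hence "{(b - 1, y), (b, y)} \<in> E" using b(1) unfolding hpath_def by (auto dest: spec[of _ "b - 1"])
  hence "surv (b, y)" using edge_endpoints assms b(2) by (auto simp: survivor_def)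
  hence "{cmap V E (a, y), cmap V E (b, y)} \<in> cE"
    using compressed_edgeI[OF assms] h b straight_path_hline[OF b(1)] interior_pts_hline[OF b(1)]
    by (auto simp: survivor_def)
  moreover have "cx b = cx a + 1"
    using compress_coord_succ[OF finite_comp_cols b(1) _ b(3)] assms by (simp add: survivor_def)
  ultimately show "{(cx a, cy y), (cx a + 1, cy y)} \<in> cE" by (simp add: cmap_eq)
next
  assume "{(cx a, cy y), (cx a + 1, cy y)} \<in> cE"
  then obtain a' b' y' where h: "a' < b'" "surv (a', y')" "cx a' = cx a" "cy y' = cy y"
    "hpath E y' a' b'" by (rule compressed_hedgeE)
  hence "a' = a" "y' = y"
    using survivor_cx_eq_iff[of "(a', y')" "(a, y)"] survivor_cy_eq_iff[of "(a', y')" "(a, y)"] assms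
    by auto
  thus "{(a, y), (a + 1, y)} \<in> E" using h unfolding hpath_def by auto
qed

lemma edge_left_compress:
  assumes "surv (b, y)"
  shows "{(b - 1, y), (b, y)} \<in> E \<longleftrightarrow> {(cx b - 1, cy y), (cx b, cy y)} \<in> cE"
proof
  assume e: "{(b - 1, y), (b, y)} \<in> E"
  obtain a where a: "a < b" "\<not> comp_col V E a" "\<forall>c. a < c \<and> c < b \<longrightarrow> comp_col V E c"
    using prev_non_member[OF finite_comp_cols] by blast
  have h: "hpath E y a b" using hpath_walk_left[OF e a(1)] a(3) by (simp add: comp_col_def)
  hence "{(a, y), (a + 1, y)} \<in> E" using a(1) unfolding hpath_def by auto
  hence "surv (a, y)" using edge_endpoints assms a(2) by (auto simp: survivor_def)
  hence "{cmap V E (a, y), cmap V E (b, y)} \<in> cE"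
    using compressed_edgeI[OF _ assms] h a straight_path_hline[OF a(1)] interior_pts_hline[OF a(1)]
    by (auto simp: survivor_def)
  moreover have "cx b = cx a + 1"
    using compress_coord_succ[OF finite_comp_cols a(1) a(2,3)] .
  ultimately show "{(cx b - 1, cy y), (cx b, cy y)} \<in> cE" by (simp add: cmap_eq)
next
  assume "{(cx b - 1, cy y), (cx b, cy y)} \<in> cE"
  hence "{(cx b - 1, cy y), (cx b - 1 + 1, cy y)} \<in> cE" by simp
  then obtain a' b' y' where h: "a' < b'" "surv (b', y')" "cx b' = cx b" "cy y' = cy y"
    "hpath E y' a' b'" by (rule compressed_hedgeE) auto
  hence "b' = b" "y' = y"
    using survivor_cx_eq_iff[of "(b', y')" "(b, y)"] survivor_cy_eq_iff[of "(b', y')" "(b, y)"] assms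
    by auto
  thus "{(b - 1, y), (b, y)} \<in> E" using h unfolding hpath_def by (auto dest: spec[of _ "b - 1"])
qed

lemma edge_dirs_compress_horizontal:
  assumes "surv p" and "d = (1, 0) \<or> d = (-1, 0)"
  shows "d \<in> edge_dirs cE (cmap V E p) \<longleftrightarrow> d \<in> edge_dirs E p"
proof -
  obtain a y where p: "p = (a, y)" by (cases p)
  show ?thesis
    using assms(2) edge_right_compress[of a y] edge_left_compress[of a y] assms(1)
    unfolding p edge_dirs_def by (auto simp: cmap_eq insert_commute)
qed

lemma edge_dirs_compress:
  assumes "surv p"
  shows "edge_dirs cE (cmap V E p) = edge_dirs E p"
proof (intro set_eqI)
  fix d
  have vertical: "d \<in> edge_dirs cE (cmap V E p) \<longleftrightarrow> d \<in> edge_dirs E p" if "d = (0, 1) \<or> d = (0, -1)"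
    using grid_shape.edge_dirs_compress_horizontal[OF transposed, of "prod.swap p" "prod.swap d"]
      that assms
    by (auto simp: survivor_transpose cmap_transpose compress_all_transpose edge_dirs_transpose
        mem_swap_image_iff)
  have "d \<in> edge_dirs cE (cmap V E p) \<Longrightarrow> d \<in> unit_dirs"
    using compressed_edge_unit[of "cmap V E p" "cmap V E p + d"]
    by (simp add: edge_dirs_def unit_dist_iff_unit_dirs)
  moreover have "d \<in> edge_dirs E p \<Longrightarrow> d \<in> unit_dirs" using edge_dirs_unit by blast
  ultimately show "d \<in> edge_dirs cE (cmap V E p) \<longleftrightarrow> d \<in> edge_dirs E p"
    using edge_dirs_compress_horizontal[OF assms, of d] vertical unfolding unit_dirs_def by blast
qed

lemma turning_compress:
  assumes "surv p"
  shows "turning cV cE (cmap V E p) \<longleftrightarrow> turning V E p"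
proof -
  have "cmap V E p \<in> cV" and "p \<in> V" using assms by (auto simp: compress_all_def survivor_def)
  thus ?thesis by (simp add: turning_iff_edge_dirs edge_dirs_compress[OF assms])
qed

lemma compressed_vertexE:
  assumes "A \<in> cV"
  obtains w where "surv w" "A = cmap V E w"
  using assms unfolding compress_all_def by auto

lemma hpath_compress:
  assumes sa: "surv (a, y)"
  shows "hpath E y a b \<longleftrightarrow> hpath cE (cy y) (cx a) (cx b)"
proof
  assume h: "hpath E y a b"
  show "hpath cE (cy y) (cx a) (cx b)" unfolding hpath_def
  proof (intro allI impI)
    fix X assume X: "cx a \<le> X \<and> X < cx b"
    then obtain x where x: "a \<le> x" "x < b" "\<not> comp_col V E x" "cx x = X"
      using compress_coord_attains[OF finite_comp_cols] by blast
    have e: "{(x, y), (x + 1, y)} \<in> E" using h x unfolding hpath_def by simp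
    hence "surv (x, y)" using edge_endpoints x(3) sa by (auto simp: survivor_def)
    thus "{(X, cy y), (X + 1, cy y)} \<in> cE" using edge_right_compress e x(4) by blast
  qed
next
  assume h: "hpath cE (cy y) (cx a) (cx b)"
  show "hpath E y a b" unfolding hpath_def
  proof (intro allI impI)
    fix x assume x: "a \<le> x \<and> x < b"
    obtain x0 where x0: "x0 < x + 1" "\<not> comp_col V E x0"
      and between: "\<forall>c. x0 < c \<and> c < x + 1 \<longrightarrow> comp_col V E c"
      using prev_non_member[OF finite_comp_cols] by blast
    have "a \<le> x0" using between x sa by (force simp: survivor_def)
    hence "cx a \<le> cx x0" by (simp add: compress_coord_mono[OF finite_comp_cols])
    moreover have "cx x0 < cx b"
      using compress_coord_strict_mono[OF finite_comp_cols _ x0(2)] x0(1) x by simp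
    ultimately have "{(cx x0, cy y), (cx x0 + 1, cy y)} \<in> cE" using h unfolding hpath_def by blast
    then obtain a' b' y' where e: "a' < b'" "surv (a', y')" "surv (b', y')" "cx a' = cx x0"
      "cy y' = cy y" "hpath E y' a' b'" by (rule compressed_hedgeE)
    have "a' = x0" using e(2,4) x0(2) compress_coord_eq_iff[OF finite_comp_cols]
      by (simp add: survivor_def)
    moreover have "y' = y" using e(2,5) sa survivor_cy_eq_iff[of "(a', y')" "(a, y)"] by simp
    moreover have "x < b'" using e(1,3) between \<open>a' = x0\<close> by (force simp: survivor_def)
    ultimately show "{(x, y), (x + 1, y)} \<in> E" using e(6) x0(1) unfolding hpath_def by simp
  qed
qed

lemma is_segment_compress_hline:
  assumes ta: "turning V E (a, y)" and tb: "turning V E (b, y)" and ab: "a < b"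
  shows "is_segment V E (a, y) (b, y) \<longleftrightarrow> is_segment cV cE (cx a, cy y) (cx b, cy y)"
proof -
  have sa: "surv (a, y)" and sb: "surv (b, y)" using ta tb turning_imp_survivor by auto
  have cab: "cx a < cx b" using compress_coord_strict_mono[OF finite_comp_cols ab] sa
    by (simp add: survivor_def)
  have turn: "turning cV cE (cx x, cy y) \<longleftrightarrow> turning V E (x, y)" if "surv (x, y)" for x
    using turning_compress[OF that] by (simp add: cmap_eq)
  have path: "straight_path E (a, y) (b, y) \<longleftrightarrow> straight_path cE (cx a, cy y) (cx b, cy y)"
    using straight_path_hline[OF ab] straight_path_hline[OF cab] hpath_compress[OF sa] by simp
  have interior: "(\<forall>w\<in>interior_pts (a, y) (b, y). \<not> turning V E w) \<longleftrightarrow>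
      (\<forall>w\<in>interior_pts (cx a, cy y) (cx b, cy y). \<not> turning cV cE w)"
    unfolding interior_pts_hline[OF ab] interior_pts_hline[OF cab]
  proof safe
    fix X assume nt: "\<forall>w\<in>{(x, y) |x. a < x \<and> x < b}. \<not> turning V E w"
      and X: "cx a < X" "X < cx b" and t: "turning cV cE (X, cy y)"
    have "(X, cy y) \<in> cV" using t by (simp add: turning_def)
    then obtain w where w: "surv w" "(X, cy y) = cmap V E w" by (rule compressed_vertexE)
    have "snd w = y" using w sa survivor_cy_eq_iff[of w "(a, y)"] by (simp add: cmap_eq)
    moreover have "a < fst w" "fst w < b"
      using w X sa sb survivor_cx_le_iff[of w "(a, y)"] survivor_cx_le_iff[of "(b, y)" w]
      by (auto simp: cmap_eq)
    moreover have "turning V E w" using turning_compress[OF w(1)] t w(2) by simp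
    ultimately show False using nt by (cases w) auto
  next
    fix x assume nt: "\<forall>w\<in>{(X, cy y) |X. cx a < X \<and> X < cx b}. \<not> turning cV cE w"
      and x: "a < x" "x < b" and t: "turning V E (x, y)"
    have sx: "surv (x, y)" using t turning_imp_survivor by blast
    have "cx a < cx x" "cx x < cx b"
      using survivor_cx_le_iff[OF sx sa] survivor_cx_le_iff[OF sb sx] x by auto
    thus False using nt turn[OF sx] t by auto
  qed
  show ?thesis unfolding is_segment_def using ta tb turn[OF sa] turn[OF sb] path interior by blast
qed

lemma is_segment_compress_same_row:
  assumes "turning V E u" "turning V E v" "snd u = snd v"
  shows "is_segment V E u v \<longleftrightarrow> is_segment cV cE (cmap V E u) (cmap V E v)"
proof -
  obtain a b y where u: "u = (a, y)" and v: "v = (b, y)"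
    using assms(3) by (cases u, cases v) auto
  consider "a < b" | "b < a" | "a = b" by linarith
  thus ?thesis
  proof cases
    case 1
    thus ?thesis using is_segment_compress_hline assms u v by (simp add: cmap_eq)
  next
    case 2
    thus ?thesis using is_segment_compress_hline[OF _ _ 2] assms u v
      is_segment_commute[of V E] is_segment_commute[of cV cE] by (simp add: cmap_eq)
  next
    case 3
    thus ?thesis using u v by (simp add: is_segment_def straight_path_def)
  qed
qed

lemma is_segment_compress:
  assumes tu: "turning V E u" and tv: "turning V E v"
  shows "is_segment V E u v \<longleftrightarrow> is_segment cV cE (cmap V E u) (cmap V E v)"
proof -
  have su: "surv u" and sv: "surv v" using tu tv turning_imp_survivor by auto
  consider "snd u = snd v" | "fst u = fst v" | "fst u \<noteq> fst v" "snd u \<noteq> snd v" by blast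
  thus ?thesis
  proof cases
    case 1
    thus ?thesis using is_segment_compress_same_row tu tv by blast
  next
    case 2
    thus ?thesis
      using grid_shape.is_segment_compress_same_row[OF transposed, of "prod.swap u" "prod.swap v"] tu tv
      by (simp add: turning_transpose compress_all_transpose cmap_transpose is_segment_transpose)
  next
    case 3
    hence "fst (cmap V E u) \<noteq> fst (cmap V E v)" "snd (cmap V E u) \<noteq> snd (cmap V E v)"
      using survivor_cx_eq_iff[OF su sv] survivor_cy_eq_iff[OF su sv] by (simp_all add: cmap_eq)
    thus ?thesis using 3 by (simp add: is_segment_def straight_path_def)
  qed
qed

lemma gdist_compress_le: "gdist (cmap V E u) (cmap V E v) \<le> gdist u v"
proof -
  have "\<bar>compress_coord P b - compress_coord P a\<bar> \<le> \<bar>b - a\<bar>" if "finite {c. P c}" for P a b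
    using compress_coord_diff_le[OF that, of a b] compress_coord_diff_le[OF that, of b a]
      compress_coord_mono[OF that, of a b] compress_coord_mono[OF that, of b a]
    by (cases "a \<le> b") auto
  thus ?thesis unfolding gdist_def cmap_eq
    using finite_comp_cols finite_comp_rows by (simp add: add_mono nat_mono)
qed

lemma column_occupied_between:
  assumes "(m, w) \<in> (edge_rel E)\<^sup>*" and "m \<in> V" and "fst m \<le> c" and "c \<le> fst w"
  shows "\<exists>y. (c, y) \<in> V"
  using assms
proof (induction arbitrary: c)
  case base
  thus ?case by (metis antisym prod.collapse)
next
  case (step w z)
  hence "z \<in> V" and "unit_dist w z" using edge_endpoints by (auto simp: edge_rel_def)
  hence "\<bar>fst w - fst z\<bar> \<le> 1" using abs_ge_zero[of "snd w - snd z"] unfolding unit_dist_def by linarith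
  hence "c \<le> fst w \<or> c = fst z" using step.prems(3) by (auto simp: abs_le_iff)
  thus ?case using step \<open>z \<in> V\<close> by (metis prod.collapse)
qed

lemma finite_turning_points: "finite (turning_points V E)"
  by (rule finite_subset[OF _ finite_V]) (auto simp: turning_points_def turning_def)

lemma survivor_cx_bound:
  assumes sa: "surv (a, y)"
  shows "cx (Min (fst ` V)) \<le> cx a \<and> cx a < cx (Min (fst ` V)) + int (card (turning_points V E))"
proof -
  define xm where "xm = Min (fst ` V)"
  have aV: "(a, y) \<in> V" using sa by (simp add: survivor_def)
  hence "a \<in> fst ` V" by force
  hence "xm \<in> fst ` V" and xa: "xm \<le> a"
    unfolding xm_def using Min_in Min_le finite_V by auto
  then obtain m where m: "m \<in> V" "fst m = xm" by blast
  define D where "D = {c. xm \<le> c \<and> c < a \<and> \<not> comp_col V E c}"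
  have "insert a D \<subseteq> fst ` turning_points V E"
  proof
    fix c assume "c \<in> insert a D"
    hence c: "xm \<le> c" "c \<le> a" "\<not> comp_col V E c" using xa sa unfolding D_def survivor_def by auto
    have "(m, (a, y)) \<in> (edge_rel E)\<^sup>*" using connected m aV by blast
    then obtain y' where "(c, y') \<in> V" using column_occupied_between[of m "(a, y)" c] m c by auto
    then obtain y'' where "turning V E (c, y'')" using c(3) unfolding comp_col_def by blast
    thus "c \<in> fst ` turning_points V E" unfolding turning_points_def by force
  qed
  hence "card (insert a D) \<le> card (fst ` turning_points V E)"
    by (simp add: card_mono finite_turning_points)
  also have "\<dots> \<le> card (turning_points V E)"
    using finite_turning_points by (rule card_image_le)
  finally have "card (insert a D) \<le> card (turning_points V E)" .
  moreover have "finite D" unfolding D_def by (rule finite_subset[of _ "{xm..a}"]) auto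
  ultimately have "card D < card (turning_points V E)" unfolding D_def by simp
  moreover have "cx a - cx xm = int (card D)"
    unfolding D_def using compress_coord_diff[OF finite_comp_cols xa] .
  ultimately show ?thesis unfolding xm_def by linarith
qed

lemma compressed_cols_bounded:
  "\<exists>x0. \<forall>p\<in>cV. x0 \<le> fst p \<and> fst p < x0 + int (card (turning_points V E))"
proof (intro exI ballI)
  fix p assume "p \<in> cV"
  then obtain w where "surv w" "p = cmap V E w" by (rule compressed_vertexE)
  thus "cx (Min (fst ` V)) \<le> fst p \<and> fst p < cx (Min (fst ` V)) + int (card (turning_points V E))"
    using survivor_cx_bound[of "fst w" "snd w"] by (simp add: cmap_eq)
qed

lemma compressed_fits_square:
  "\<exists>x0 y0. \<forall>p\<in>cV. x0 \<le> fst p \<and> fst p < x0 + int (card (turning_points V E))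
      \<and> y0 \<le> snd p \<and> snd p < y0 + int (card (turning_points V E))"
proof -
  obtain x0 where "\<forall>p\<in>cV. x0 \<le> fst p \<and> fst p < x0 + int (card (turning_points V E))"
    using compressed_cols_bounded by blast
  moreover obtain y0 where "\<forall>p\<in>cV. y0 \<le> snd p \<and> snd p < y0 + int (card (turning_points V E))"
    using grid_shape.compressed_cols_bounded[OF transposed]
    by (auto simp: compress_all_transpose turning_points_transpose card_image)
  ultimately show ?thesis by blast
qed

lemma turning_points_compress: "turning_points cV cE = cmap V E ` turning_points V E"
proof
  show "turning_points cV cE \<subseteq> cmap V E ` turning_points V E"
  proof
    fix A assume "A \<in> turning_points cV cE"
    hence t: "turning cV cE A" by (simp add: turning_points_def)
    hence "A \<in> cV" by (simp add: turning_def)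
    then obtain w where "surv w" "A = cmap V E w" by (rule compressed_vertexE)
    thus "A \<in> cmap V E ` turning_points V E"
      using turning_compress t by (auto simp: turning_points_def)
  qed
  show "cmap V E ` turning_points V E \<subseteq> turning_points cV cE"
    using turning_compress turning_imp_survivor by (auto simp: turning_points_def)
qed

lemma turning_points_survive: "turning_points V E \<subseteq> {p. surv p}"
  using turning_imp_survivor by (auto simp: turning_points_def)

lemma bij_betw_turning_points:
  "bij_betw (cmap V E) (turning_points V E) (turning_points cV cE)"
  unfolding bij_betw_def turning_points_compress
  using inj_on_subset[OF inj_on_cmap turning_points_survive] by simp

lemma line_segments_compress: "line_segments cV cE = (\<lambda>s. cmap V E ` s) ` line_segments V E"
proof
  show "line_segments cV cE \<subseteq> (\<lambda>s. cmap V E ` s) ` line_segments V E"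
  proof
    fix S assume "S \<in> line_segments cV cE"
    then obtain A B where S: "S = {A, B}" and seg: "is_segment cV cE A B"
      unfolding line_segments_def by blast
    have "A \<in> turning_points cV cE" "B \<in> turning_points cV cE"
      using seg by (auto simp: is_segment_def turning_points_def)
    then obtain u v where uv: "u \<in> turning_points V E" "v \<in> turning_points V E"
      "A = cmap V E u" "B = cmap V E v" unfolding turning_points_compress by blast
    hence "{u, v} \<in> line_segments V E"
      using is_segment_compress seg unfolding line_segments_def turning_points_def by blast
    moreover have "S = cmap V E ` {u, v}" using S uv by simp
    ultimately show "S \<in> (\<lambda>s. cmap V E ` s) ` line_segments V E" by blast
  qed
  show "(\<lambda>s. cmap V E ` s) ` line_segments V E \<subseteq> line_segments cV cE"
  proof
    fix S assume "S \<in> (\<lambda>s. cmap V E ` s) ` line_segments V E"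
    then obtain u v where S: "S = cmap V E ` {u, v}" and seg: "is_segment V E u v"
      unfolding line_segments_def by blast
    moreover have "turning V E u" "turning V E v" using seg by (simp_all add: is_segment_def)
    ultimately have "is_segment cV cE (cmap V E u) (cmap V E v)"
      using is_segment_compress seg by blast
    thus "S \<in> line_segments cV cE" using S unfolding line_segments_def by blast
  qed
qed

lemma bij_betw_line_segments:
  "bij_betw (\<lambda>s. cmap V E ` s) (line_segments V E) (line_segments cV cE)"
proof -
  have "line_segments V E \<subseteq> Pow {p. surv p}"
    using turning_points_survive by (auto simp: line_segments_def is_segment_def turning_points_def)
  hence "inj_on (\<lambda>s. cmap V E ` s) (line_segments V E)"
    using inj_on_image_Pow[OF inj_on_cmap] inj_on_subset by blast
  thus ?thesis unfolding bij_betw_def line_segments_compress by simp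
qed

lemma turning_points_correspondence:
  "\<forall>u\<in>turning_points V E. \<forall>v\<in>turning_points V E.
      (is_segment V E u v \<longleftrightarrow> is_segment cV cE (cmap V E u) (cmap V E v))
    \<and> (is_segment V E u v \<longrightarrow> gdist (cmap V E u) (cmap V E v) \<le> gdist u v)
    \<and> (fst u \<le> fst v \<longleftrightarrow> fst (cmap V E u) \<le> fst (cmap V E v))
    \<and> (snd u \<le> snd v \<longleftrightarrow> snd (cmap V E u) \<le> snd (cmap V E v))"
proof (intro ballI)
  fix u v assume "u \<in> turning_points V E" "v \<in> turning_points V E"
  hence "turning V E u" "turning V E v" "surv u" "surv v"
    using turning_points_survive by (auto simp: turning_points_def)
  thus "(is_segment V E u v \<longleftrightarrow> is_segment cV cE (cmap V E u) (cmap V E v))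
    \<and> (is_segment V E u v \<longrightarrow> gdist (cmap V E u) (cmap V E v) \<le> gdist u v)
    \<and> (fst u \<le> fst v \<longleftrightarrow> fst (cmap V E u) \<le> fst (cmap V E v))
    \<and> (snd u \<le> snd v \<longleftrightarrow> snd (cmap V E u) \<le> snd (cmap V E v))"
    using is_segment_compress gdist_compress_le survivor_cx_le_iff survivor_cy_le_iff
    by (simp add: cmap_eq)
qed

end

theorem proposition2p2:
  fixes V :: "gpt set" and E :: "gpt set set" and k l :: nat
    and iV :: "gpt set" and iE :: "gpt set set"
  assumes shape: "is_shape V E"
    and k: "card (turning_points V E) = k"
    and l: "card (line_segments V E) = l"
    and iS: "compress_all V E = (iV, iE)"
  shows
    \<comment> \<open>(a)\<close>
    "card (turning_points iV iE) = k \<and> card (line_segments iV iE) = l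
     \<comment> \<open>(b)\<close>
     \<and> (\<exists>f. bij_betw f (turning_points V E) (turning_points iV iE)
          \<and> bij_betw (\<lambda>s. f ` s) (line_segments V E) (line_segments iV iE)
          \<and> (\<forall>u\<in>turning_points V E. \<forall>v\<in>turning_points V E.
               (is_segment V E u v \<longleftrightarrow> is_segment iV iE (f u) (f v))
             \<and> (is_segment V E u v \<longrightarrow> gdist (f u) (f v) \<le> gdist u v)
             \<and> (fst u \<le> fst v \<longleftrightarrow> fst (f u) \<le> fst (f v))
             \<and> (snd u \<le> snd v \<longleftrightarrow> snd (f u) \<le> snd (f v))))
     \<comment> \<open>(c)\<close>
     \<and> (\<exists>x0 y0. \<forall>p\<in>iV. x0 \<le> fst p \<and> fst p < x0 + int k \<and> y0 \<le> snd p \<and> snd p < y0 + int k)"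
proof -
  interpret grid_shape V E by (rule grid_shape.intro[OF shape])
  have iV: "iV = cV" and iE: "iE = cE" using iS by auto
  note tp = bij_betw_turning_points[folded iV iE]
  note ls = bij_betw_line_segments[folded iV iE]
  have "card (turning_points iV iE) = k" "card (line_segments iV iE) = l"
    using bij_betw_same_card[OF tp] bij_betw_same_card[OF ls] k l by simp_all
  thus ?thesis
    using tp ls turning_points_correspondence[folded iV iE] compressed_fits_square[folded iV, unfolded k]
    by (intro conjI exI[of _ "cmap V E"])
qed

end
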